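(* Let $(X,d)$ be a proper metric space that admits a conical bicombing. Then there exists a bicombing $s\colon X\times X\times[0,1]\to X$ such that: (1) $s$ is consistent; (2) $s_{xy}(\cdot)$ is a straight geodesic for all $x,y\in X$; (3) the function $t\mapsto d(s_{xy}(t),s_{x'y'}(t))$ is convex on $[0,1]$ for all points $x,y,x',y'\in X$ with $d(x,y)=d(x',y')$.
   Context: A bicombing on $(X,d)$ is any map $\sigma\colon X\times X\times[0,1]\to X$ (no continuity required) such that each $\sigma_{xy}:=\sigma(x,y,\cdot)$ is a geodesic from $x$ to $y$, i.e. $\sigma_{xy}(0)=x$, $\sigma_{xy}(1)=y$, $d(\sigma_{xy}(s),\sigma_{xy}(t))=|s-t|d(x,y)$. It is conical if $d(\sigma_{xy}(t),\sigma_{x'y'}(t))\le(1-t)d(x,x')+t\,d(y,y')$ for all $x,y,x',y'\in X$, $t\in[0,1]$. A bicombing $\sigma$ is consistent if $\sigma_{pq}([0,1])\subset\sigma_{xy}([0,1])$ whenever $p,q\in\sigma_{xy}([0,1])$. A geodesic $c\colon[0,1]\to X$ is straight if $t\mapsto d(z,c(t))$ is convex on $[0,1]$ for every $z\in X$. A metric space is proper if closed bounded sets are compact. *)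

theory Defs
  imports "HOL-Analysis.Analysis"
begin

definition proper_space :: "'a::metric_space itself \<Rightarrow> bool" where
  "proper_space _ \<longleftrightarrow> (\<forall>S::'a set. closed S \<and> bounded S \<longrightarrow> compact S)"

definition geodesic01 :: "(real \<Rightarrow> 'a::metric_space) \<Rightarrow> 'a \<Rightarrow> 'a \<Rightarrow> bool" where
  "geodesic01 c x y \<longleftrightarrow> c 0 = x \<and> c 1 = y \<and>
     (\<forall>s\<in>{0..1}. \<forall>t\<in>{0..1}. dist (c s) (c t) = \<bar>s - t\<bar> * dist x y)"

definition bicombing :: "('a::metric_space \<Rightarrow> 'a \<Rightarrow> real \<Rightarrow> 'a) \<Rightarrow> bool" where
  "bicombing \<sigma> \<longleftrightarrow> (\<forall>x y. geodesic01 (\<sigma> x y) x y)"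

definition conical :: "('a::metric_space \<Rightarrow> 'a \<Rightarrow> real \<Rightarrow> 'a) \<Rightarrow> bool" where
  "conical \<sigma> \<longleftrightarrow> (\<forall>x y x' y'. \<forall>t\<in>{0..1}.
     dist (\<sigma> x y t) (\<sigma> x' y' t) \<le> (1 - t) * dist x x' + t * dist y y')"

definition consistent :: "('a::metric_space \<Rightarrow> 'a \<Rightarrow> real \<Rightarrow> 'a) \<Rightarrow> bool" where
  "consistent \<sigma> \<longleftrightarrow> (\<forall>x y p q. p \<in> \<sigma> x y ` {0..1} \<and> q \<in> \<sigma> x y ` {0..1} \<longrightarrow>
     \<sigma> p q ` {0..1} \<subseteq> \<sigma> x y ` {0..1})"

definition straight :: "(real \<Rightarrow> 'a::metric_space) \<Rightarrow> bool" where
  "straight c \<longleftrightarrow> (\<forall>z. convex_on {0..1} (\<lambda>t. dist z (c t)))"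

end

theory Submission
  imports Defs
begin

text \<open>For \<open>m\<close> steps, a midpoint chain from \<open>x\<close> to \<open>y\<close> is a sequence \<open>p\<^sub>0 = x, ..., p\<^sub>m = y\<close>
  in which every interior point is the \<open>\<sigma>\<close>-midpoint of its two neighbours. Such chains exist in
  complete spaces by a contraction argument, and conicality makes \<open>i \<mapsto> d(p\<^sub>i, q\<^sub>i)\<close> discretely
  convex for any two chains with the same number of steps. The discrete maximum principle then
  shows that chains are discrete geodesics, depend convexly on their endpoints and almost agree
  with subchains of finer chains. Letting the step length tend to zero and passing to a cluster
  point in the product of the compact balls \<open>cball x (d(x, y))\<close> (this is where properness
  enters) yields a bicombing which inherits all these properties: distances between geodesics of
  equal length are convex, geodesics are straight, and subsegments of geodesics are geodesics.\<close>

lemma subharmonic_le_chord: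
  fixes v :: "nat \<Rightarrow> real"
  assumes m: "0 < m"
    and subharmonic: "\<And>i. 0 < i \<Longrightarrow> i < m \<Longrightarrow> 2 * v i \<le> v (i - 1) + v (i + 1)"
    and i: "i \<le> m"
  shows "v i \<le> ((real m - real i) * v 0 + real i * v m) / real m"
proof -
  define chord where "chord j = ((real m - real j) * v 0 + real j * v m) / real m" for j
  define w where "w j = v j - chord j" for j
  have w_ends: "w 0 = 0" "w m = 0"
    using m by (auto simp: w_def chord_def field_simps)
  have w_subharmonic: "2 * w j \<le> w (j - 1) + w (j + 1)" if "0 < j" "j < m" for j
  proof -
    have "chord (j - 1) + chord (j + 1) = 2 * chord j"
      using that m by (simp add: chord_def of_nat_diff field_simps)
    then show ?thesis
      using subharmonic[OF that] unfolding w_def by argo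
  qed
  define W where "W = Max (w ` {0..m})"
  have w_le_W: "w j \<le> W" if "j \<le> m" for j
    unfolding W_def using that by (intro Max_ge) auto
  have "W \<le> 0"
  proof (rule ccontr)
    assume "\<not> W \<le> 0"
    have "W \<in> w ` {0..m}"
      unfolding W_def by (rule Max_in) auto
    then have "\<exists>j. j \<le> m \<and> w j = W"
      by auto
    define j where "j = (LEAST j. j \<le> m \<and> w j = W)"
    have j: "j \<le> m" "w j = W"
      using LeastI_ex[OF \<open>\<exists>j. j \<le> m \<and> w j = W\<close>] unfolding j_def by auto
    have "0 < w j"
      using j \<open>\<not> W \<le> 0\<close> by simp
    then have "j \<noteq> 0" "j \<noteq> m"
      using w_ends by (metis less_irrefl)+
    then have "0 < j" "j < m"
      using j by auto
    have "w (j - 1) \<noteq> W"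
      using not_less_Least[of "j - 1" "\<lambda>j. j \<le> m \<and> w j = W"] \<open>0 < j\<close> j
      unfolding j_def by auto
    moreover have "w (j - 1) \<le> W"
      using w_le_W[of "j - 1"] j by simp
    ultimately have "w (j - 1) < W"
      by simp
    then show False
      using w_subharmonic[OF \<open>0 < j\<close> \<open>j < m\<close>] w_le_W[of "j + 1"] \<open>j < m\<close> j by simp
  qed
  then show ?thesis
    using w_le_W[OF i] by (simp add: w_def chord_def)
qed

lemma Cauchy_geometric_steps:
  fixes f :: "nat \<Rightarrow> 'a::metric_space"
  assumes steps: "\<And>n. dist (f (Suc n)) (f n) \<le> K * c ^ n" and c: "0 \<le> c" "c < 1"
  shows "Cauchy f"
proof -
  have "dist (f (Suc 0)) (f 0) \<le> K"
    using steps[of 0] by simp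
  then have "0 \<le> K"
    using zero_le_dist[of "f (Suc 0)" "f 0"] by linarith
  have telescope: "dist (f (n + d)) (f n) \<le> K * (c ^ n - c ^ (n + d)) / (1 - c)" for n d
  proof (induction d)
    case (Suc d)
    have "dist (f (n + Suc d)) (f n) \<le> dist (f (Suc (n + d))) (f (n + d)) + dist (f (n + d)) (f n)"
      using dist_triangle by simp
    also have "\<dots> \<le> K * c ^ (n + d) + K * (c ^ n - c ^ (n + d)) / (1 - c)"
      using steps[of "n + d"] Suc by linarith
    also have "\<dots> = K * (c ^ n - c ^ (n + Suc d)) / (1 - c)"
      using c by (simp add: field_simps)
    finally show ?case .
  qed simp
  have tail: "dist (f m) (f n) \<le> K * c ^ n / (1 - c)" if "n \<le> m" for m n
  proof -
    have "K * (c ^ n - c ^ m) \<le> K * c ^ n"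
      using \<open>0 \<le> K\<close> c by (simp add: mult_left_mono)
    then show ?thesis
      using telescope[of n "m - n"] that c by (simp add: divide_right_mono order_trans)
  qed
  show ?thesis
    unfolding Cauchy_altdef2
  proof (intro allI impI)
    fix e :: real
    assume "0 < e"
    obtain N where N: "c ^ N < e * (1 - c) / (K + 1)"
      using real_arch_pow_inv[of "e * (1 - c) / (K + 1)" c] \<open>0 < e\<close> c \<open>0 \<le> K\<close> by auto
    have "K * c ^ N \<le> (K + 1) * c ^ N"
      using c by (intro mult_right_mono) auto
    also have "\<dots> < e * (1 - c)"
      using N \<open>0 \<le> K\<close> by (simp add: field_simps)
    finally have "K * c ^ N / (1 - c) < e"
      using c by (simp add: field_simps)
    then show "\<exists>N. \<forall>n\<ge>N. dist (f n) (f N) < e"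
      using tail by (meson le_less_trans)
  qed
qed

lemma proper_space_compact_cball:
  assumes "proper_space TYPE('a::metric_space)"
  shows "compact (cball (a::'a) r)"
  using assms unfolding proper_space_def by auto

lemma proper_space_complete:
  assumes "proper_space TYPE('a::metric_space)"
  shows "complete (UNIV :: 'a set)"
proof (rule completeI)
  fix f :: "nat \<Rightarrow> 'a"
  assume "Cauchy f"
  obtain a r where "range f \<subseteq> cball a r"
    using cauchy_imp_bounded[OF \<open>Cauchy f\<close>] unfolding bounded_subset_cball by blast
  then obtain l where "f \<longlonglongrightarrow> l"
    using completeE[OF compact_imp_complete[OF proper_space_compact_cball[OF assms]] _ \<open>Cauchy f\<close>]
    by blast
  then show "\<exists>l\<in>UNIV. f \<longlonglongrightarrow> l"
    by blast
qed

lemma product_cluster_point_exists: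
  fixes F :: "nat \<Rightarrow> 'i \<Rightarrow> 'b::topological_space"
  assumes "\<And>i. compact (K i)" and "\<And>n i. F n i \<in> K i"
  shows "\<exists>g. inf (nhds g) (filtermap F sequentially) \<noteq> bot"
proof -
  have "compactin (product_topology (\<lambda>_. euclidean) UNIV) (PiE UNIV K)"
    by (simp add: compactin_PiE assms(1))
  then have "compact (PiE UNIV K)"
    by (simp add: euclidean_product_topology)
  moreover have "eventually (\<lambda>f. f \<in> PiE UNIV K) (filtermap F sequentially)"
    using assms(2) by (simp add: eventually_filtermap PiE_UNIV_domain)
  moreover have "filtermap F sequentially \<noteq> bot"
    by (simp add: filtermap_bot_iff)
  ultimately show ?thesis
    unfolding compact_filter by blast
qed

section \<open>Midpoint chains\<close>

locale conical_midpoint_map =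
  fixes mid :: "'a::metric_space \<Rightarrow> 'a \<Rightarrow> 'a"
  assumes mid_same [simp]: "mid a a = a"
    and dist_mid_mid: "dist (mid a b) (mid a' b') \<le> (dist a a' + dist b b') / 2"
begin

text \<open>Since \<^term>\<open>mid\<close> need not be symmetric, the orientation of the midpoints in a chain
  alternates with the parity of the position; this makes reversed chains chains again.\<close>

definition alt_mid :: "nat \<Rightarrow> 'a \<Rightarrow> 'a \<Rightarrow> 'a" where
  "alt_mid k a b = (if odd k then mid a b else mid b a)"

definition midpoint_chain :: "nat \<Rightarrow> nat \<Rightarrow> 'a \<Rightarrow> 'a \<Rightarrow> (nat \<Rightarrow> 'a) \<Rightarrow> bool" where
  "midpoint_chain k m u v p \<longleftrightarrow> p 0 = u \<and> p m = v \<and>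
     (\<forall>i. 0 < i \<and> i < m \<longrightarrow> p i = alt_mid (k + i) (p (i - 1)) (p (i + 1)))"

lemma dist_alt_mid_alt_mid: "dist (alt_mid k a b) (alt_mid k a' b') \<le> (dist a a' + dist b b') / 2"
proof (cases "odd k")
  case False
  then show ?thesis
    using dist_mid_mid[of b a b' a'] by (simp add: alt_mid_def add.commute)
next
  case True
  then show ?thesis
    using dist_mid_mid[of a b a' b'] by (simp add: alt_mid_def)
qed

lemma alt_mid_same [simp]: "alt_mid k a a = a"
  by (simp add: alt_mid_def)

lemma alt_mid_swap: "odd (j + j') \<Longrightarrow> alt_mid j a b = alt_mid j' b a"
  by (auto simp: alt_mid_def)

lemma tendsto_alt_mid:
  assumes "(f \<longlongrightarrow> a) F" and "(g \<longlongrightarrow> b) F"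
  shows "((\<lambda>x. alt_mid k (f x) (g x)) \<longlongrightarrow> alt_mid k a b) F"
proof -
  have "((\<lambda>x. (dist (f x) a + dist (g x) b) / 2) \<longlongrightarrow> (0 + 0) / 2) F"
    using assms by (intro tendsto_intros) (auto simp: tendsto_dist_iff[symmetric])
  then have bound: "((\<lambda>x. (dist (f x) a + dist (g x) b) / 2) \<longlongrightarrow> 0) F"
    by simp
  show ?thesis
  proof (rule tendsto_dist_iff[THEN iffD2], rule tendsto_sandwich[of "\<lambda>_. 0"])
    show "\<forall>\<^sub>F x in F. dist (alt_mid k (f x) (g x)) (alt_mid k a b) \<le> (dist (f x) a + dist (g x) b) / 2"
      by (intro always_eventually allI dist_alt_mid_alt_mid)
  qed (use bound in auto)
qed

lemma midpoint_chain_ends: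
  "midpoint_chain k m u v p \<Longrightarrow> p 0 = u"
  "midpoint_chain k m u v p \<Longrightarrow> p m = v"
  by (simp_all add: midpoint_chain_def)

lemma midpoint_chain_const: "midpoint_chain k m z z (\<lambda>_. z)"
  by (simp add: midpoint_chain_def)

lemma midpoint_chain_compare:
  assumes p: "midpoint_chain k m u v p" and q: "midpoint_chain k m u' v' q"
    and m: "0 < m" and i: "i \<le> m"
  shows "dist (p i) (q i) \<le> ((real m - real i) * dist u u' + real i * dist v v') / real m"
proof -
  have "dist (p i) (q i) \<le> ((real m - real i) * dist (p 0) (q 0) + real i * dist (p m) (q m)) / real m"
  proof (rule subharmonic_le_chord[OF m _ i])
    fix j
    assume j: "0 < j" "j < m"
    have "dist (p j) (q j)
        = dist (alt_mid (k + j) (p (j - 1)) (p (j + 1))) (alt_mid (k + j) (q (j - 1)) (q (j + 1)))"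
      using p q j unfolding midpoint_chain_def by auto
    also have "\<dots> \<le> (dist (p (j - 1)) (q (j - 1)) + dist (p (j + 1)) (q (j + 1))) / 2"
      by (rule dist_alt_mid_alt_mid)
    finally show "2 * dist (p j) (q j) \<le> dist (p (j - 1)) (q (j - 1)) + dist (p (j + 1)) (q (j + 1))"
      by simp
  qed
  then show ?thesis
    using p q by (simp add: midpoint_chain_ends)
qed

lemma midpoint_chain_dist_point:
  assumes "midpoint_chain k m u v p" and "0 < m" and "i \<le> m"
  shows "dist (p i) z \<le> ((real m - real i) * dist u z + real i * dist v z) / real m"
  using midpoint_chain_compare[OF assms(1) midpoint_chain_const assms(2,3)] by simp

lemma midpoint_chain_shift:
  assumes p: "midpoint_chain k m u v p" and ij: "i \<le> j" "j \<le> m"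
  shows "midpoint_chain (k + i) (j - i) (p i) (p j) (\<lambda>l. p (l + i))"
  unfolding midpoint_chain_def
proof (intro conjI allI impI)
  fix l
  assume l: "0 < l \<and> l < j - i"
  then have "p (l + i) = alt_mid (k + (l + i)) (p (l + i - 1)) (p (l + i + 1))"
    using p ij unfolding midpoint_chain_def by auto
  moreover have "l + i - 1 = l - 1 + i"
    using l by simp
  ultimately show "p (l + i) = alt_mid (k + i + l) (p (l - 1 + i)) (p (l + 1 + i))"
    by (simp add: ac_simps)
qed (use ij in auto)

lemma midpoint_chain_parity:
  assumes "midpoint_chain k m u v p" and "even (k + k')"
  shows "midpoint_chain k' m u v p"
proof -
  have "alt_mid (k + i) = alt_mid (k' + i)" for i
    using assms(2) by (auto simp: alt_mid_def fun_eq_iff)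
  then show ?thesis
    using assms(1) by (simp add: midpoint_chain_def)
qed

lemma midpoint_chain_reverse:
  assumes p: "midpoint_chain k m u v p"
  shows "midpoint_chain (k + m + 1) m v u (\<lambda>l. p (m - l))"
  unfolding midpoint_chain_def
proof (intro conjI allI impI)
  fix l
  assume l: "0 < l \<and> l < m"
  then have "0 < m - l" "m - l < m"
    by auto
  then have "p (m - l) = alt_mid (k + (m - l)) (p (m - l - 1)) (p (m - l + 1))"
    using p unfolding midpoint_chain_def by blast
  moreover have "m - (l - 1) = m - l + 1" "m - (l + 1) = m - l - 1"
    using l by auto
  moreover have "odd ((k + m + 1 + l) + (k + (m - l)))"
    using l by presburger
  ultimately show "p (m - l) = alt_mid (k + m + 1 + l) (p (m - (l - 1))) (p (m - (l + 1)))"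
    using alt_mid_swap by metis
qed (use p in \<open>auto simp: midpoint_chain_def\<close>)

lemma midpoint_chain_dist:
  assumes p: "midpoint_chain k m u v p" and m: "0 < m" and "i \<le> m" "j \<le> m"
  shows "dist (p i) (p j) = \<bar>real i - real j\<bar> * dist u v / real m"
proof -
  have ordered: "dist (p i) (p j) = (real j - real i) * dist u v / real m"
    if ij: "i \<le> j" "j \<le> m" for i j
  proof -
    have near_u: "dist (p i) u \<le> real i * dist u v / real m"
      using midpoint_chain_dist_point[OF p m, of i u] ij by (simp add: dist_commute)
    have near_v: "dist (p j) v \<le> (real m - real j) * dist u v / real m"
      using midpoint_chain_dist_point[OF p m, of j v] ij by simp
    have "dist (p i) (p j) \<le> (real j - real i) * dist u v / real m"
    proof (cases "i = m")
      case False
      have tail: "midpoint_chain (k + i) (m - i) (p i) v (\<lambda>l. p (l + i))"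
        using midpoint_chain_shift[OF p, of i m] ij midpoint_chain_ends(2)[OF p] by simp
      have "dist (p (j - i + i)) (p i) \<le> real (j - i) * dist v (p i) / real (m - i)"
        using midpoint_chain_dist_point[OF tail, of "j - i" "p i"] ij False by simp
      also have "\<dots> \<le> real (j - i) * ((real m - real i) * dist u v / real m) / real (m - i)"
        using midpoint_chain_dist_point[OF p m, of i v] ij
        by (intro divide_right_mono mult_left_mono) (auto simp: dist_commute)
      also have "\<dots> = (real j - real i) * dist u v / real m"
        using False ij m by (simp add: field_simps)
      finally show ?thesis
        using ij by (simp add: dist_commute)
    qed (use ij in simp)
    moreover have "dist u v \<le> dist u (p i) + dist (p i) (p j) + dist (p j) v"
      by (metis add.commute add_left_mono dist_triangle order_trans)
    moreover have "dist u v - real i * dist u v / real m - (real m - real j) * dist u v / real m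
        = (real j - real i) * dist u v / real m"
      using m by (simp add: field_simps)
    ultimately show ?thesis
      using near_u near_v by (simp add: dist_commute)
  qed
  show ?thesis
  proof (cases "i \<le> j")
    case True
    then show ?thesis using ordered[of i j] assms by simp
  next
    case False
    then show ?thesis using ordered[of j i] assms by (simp add: dist_commute)
  qed
qed

definition midpoint_relax :: "nat \<Rightarrow> nat \<Rightarrow> (nat \<Rightarrow> 'a) \<Rightarrow> nat \<Rightarrow> 'a" where
  "midpoint_relax k m p i = (if 0 < i \<and> i < m then alt_mid (k + i) (p (i - 1)) (p (i + 1)) else p i)"

text \<open>The relaxation contracts the weighted distance \<open>max\<^sub>i d(p\<^sub>i, q\<^sub>i) / (i (m - i))\<close>
  by the factor \<open>1 - 1/m\<^sup>2\<close>, since \<open>(i - 1)(m - i + 1) + (i + 1)(m - i - 1) = 2 i (m - i) - 2\<close>.\<close>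

lemma dist_midpoint_relax_le:
  assumes m: "0 < m" and "0 \<le> \<rho>"
    and pq: "\<And>j. dist (p j) (q j) \<le> \<rho> * (real j * real (m - j))"
  shows "dist (midpoint_relax k m p i) (midpoint_relax k m q i)
    \<le> (1 - 1 / real m ^ 2) * \<rho> * (real i * real (m - i))"
proof (cases "0 < i \<and> i < m")
  case True
  define w where "w j = real j * real (m - j)" for j
  have "dist (midpoint_relax k m p i) (midpoint_relax k m q i)
      \<le> (dist (p (i - 1)) (q (i - 1)) + dist (p (i + 1)) (q (i + 1))) / 2"
  proof -
    have "midpoint_relax k m r i = alt_mid (k + i) (r (i - 1)) (r (i + 1))" for r
      using True by (simp add: midpoint_relax_def)
    then show ?thesis
      by (simp only: dist_alt_mid_alt_mid)
  qed
  also have "\<dots> \<le> (\<rho> * w (i - 1) + \<rho> * w (i + 1)) / 2"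
    using pq[of "i - 1"] pq[of "i + 1"] unfolding w_def by (intro divide_right_mono add_mono) auto
  also have "\<dots> = \<rho> * (w (i - 1) + w (i + 1)) / 2"
    by (simp add: algebra_simps)
  also have "w (i - 1) + w (i + 1) = 2 * (w i - 1)"
    using True by (simp add: w_def of_nat_diff algebra_simps)
  also have "\<rho> * (2 * (w i - 1)) / 2 = \<rho> * (w i - 1)"
    by simp
  also have "\<dots> \<le> \<rho> * ((1 - 1 / real m ^ 2) * w i)"
  proof (rule mult_left_mono)
    have "w i \<le> real m ^ 2"
      unfolding w_def power2_eq_square using True by (intro mult_mono) auto
    then show "w i - 1 \<le> (1 - 1 / real m ^ 2) * w i"
      using m by (simp add: field_simps)
  qed (rule \<open>0 \<le> \<rho>\<close>)
  finally show ?thesis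
    by (simp add: w_def ac_simps)
next
  case False
  then have "midpoint_relax k m r i = r i" for r
    by (auto simp: midpoint_relax_def)
  moreover have w0: "real i * real (m - i) = 0"
    using False by auto
  moreover have "dist (p i) (q i) = 0"
    using pq[of i] unfolding w0 by simp
  ultimately show ?thesis
    unfolding w0 by simp
qed

lemma dist_midpoint_relax_iterates:
  fixes k :: nat and p :: "nat \<Rightarrow> 'a"
  assumes m: "0 < m"
  defines "q \<equiv> \<lambda>n. (midpoint_relax k m ^^ n) p"
  shows "dist (q (Suc n) i) (q n i)
    \<le> (\<Sum>j\<le>m. dist (q 1 j) (q 0 j)) * (1 - 1 / real m ^ 2) ^ n * (real i * real (m - i))"
proof (induction n arbitrary: i)
  case 0
  show ?case
  proof (cases "0 < i \<and> i < m")
    case True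
    have "dist (q 1 i) (q 0 i) \<le> (\<Sum>j\<le>m. dist (q 1 j) (q 0 j)) * 1"
      using member_le_sum[of i "{..m}" "\<lambda>j. dist (q 1 j) (q 0 j)"] True by simp
    also have "\<dots> \<le> (\<Sum>j\<le>m. dist (q 1 j) (q 0 j)) * (real i * real (m - i))"
      using True mult_mono[of 1 "real i" 1 "real (m - i)"] by (intro mult_left_mono sum_nonneg) auto
    finally show ?thesis
      by simp
  next
    case False
    then have "q 1 i = q 0 i"
      by (auto simp: q_def midpoint_relax_def)
    then show ?thesis
      by (simp add: sum_nonneg)
  qed
next
  case (Suc n)
  have "q (Suc (Suc n)) = midpoint_relax k m (q (Suc n))" "q (Suc n) = midpoint_relax k m (q n)"
    by (simp_all add: q_def)
  then show ?case
    using dist_midpoint_relax_le[OF m _ Suc.IH, of k i] m by (simp add: sum_nonneg ac_simps)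
qed

lemma midpoint_chain_exists:
  assumes complete: "complete (UNIV :: 'a set)" and m: "0 < m"
  shows "\<exists>p. midpoint_chain k m u v p"
proof -
  define q where "q n = (midpoint_relax k m ^^ n) (\<lambda>i. if i = 0 then u else v)" for n
  have q_Suc: "q (Suc n) = midpoint_relax k m (q n)" for n
    by (simp add: q_def)
  have boundary: "q n i = (if i = 0 then u else v)" if "\<not> (0 < i \<and> i < m)" for n i
    using that by (induction n) (auto simp: q_def midpoint_relax_def)
  define S where "S = (\<Sum>j\<le>m. dist (q 1 j) (q 0 j))"
  have "dist (q (Suc n) i) (q n i) \<le> (S * (real i * real (m - i))) * (1 - 1 / real m ^ 2) ^ n" for n i
    using dist_midpoint_relax_iterates[OF m] by (simp add: q_def S_def ac_simps)
  then have "Cauchy (\<lambda>n. q n i)" for i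
    by (rule Cauchy_geometric_steps) (use m in \<open>auto simp: field_simps\<close>)
  then have "convergent (\<lambda>n. q n i)" for i
    using completeE[OF complete] unfolding convergent_def by blast
  define p where "p i = lim (\<lambda>n. q n i)" for i
  have p: "(\<lambda>n. q n i) \<longlonglongrightarrow> p i" for i
    using \<open>convergent (\<lambda>n. q n i)\<close> by (simp add: p_def convergent_LIMSEQ_iff)
  have fixed: "midpoint_relax k m p i = p i" for i
  proof -
    have "(\<lambda>n. midpoint_relax k m (q n) i) \<longlonglongrightarrow> midpoint_relax k m p i"
      by (simp add: midpoint_relax_def tendsto_alt_mid p)
    moreover have "(\<lambda>n. midpoint_relax k m (q n) i) \<longlonglongrightarrow> p i"
      using LIMSEQ_Suc[OF p[of i]] by (simp add: q_Suc)
    ultimately show ?thesis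
      by (rule LIMSEQ_unique)
  qed
  have "p i = (if i = 0 then u else v)" if "\<not> (0 < i \<and> i < m)" for i
    using p[of i] boundary[OF that] by (simp add: LIMSEQ_const_iff)
  then have "p 0 = u" "p m = v"
    using m by auto
  moreover have "p i = alt_mid (k + i) (p (i - 1)) (p (i + 1))" if "0 < i \<and> i < m" for i
    using fixed[of i] that by (simp add: midpoint_relax_def)
  ultimately have "midpoint_chain k m u v p"
    by (simp add: midpoint_chain_def)
  then show ?thesis
    by blast
qed

lemma midpoint_chain_compare_finer:
  assumes p: "midpoint_chain k m u v p" and T: "midpoint_chain k' M u' v' T" and m: "0 < m"
    and e: "e \<le> 1" "m + e \<le> M" "even (k' + e + k)" and l: "l \<le> m"
  shows "dist (p l) (T (l + e)) \<le> dist u u' + dist v v' + (real M - real m + 1) * (dist u' v' / real M)"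
proof -
  have M: "0 < M"
    using m e by simp
  have "midpoint_chain (k' + e) m (T e) (T (m + e)) (\<lambda>j. T (j + e))"
    using midpoint_chain_shift[OF T, of e "m + e"] e by simp
  then have T_part: "midpoint_chain k m (T e) (T (m + e)) (\<lambda>j. T (j + e))"
    by (rule midpoint_chain_parity) (use e in simp)
  define A where "A = dist u (T e)"
  define B where "B = dist v (T (m + e))"
  have "dist (p l) (T (l + e)) \<le> ((real m - real l) * A + real l * B) / real m"
    using midpoint_chain_compare[OF p T_part m l] by (simp add: A_def B_def)
  also have "\<dots> \<le> (real m * A + real m * B) / real m"
    using l by (intro divide_right_mono add_mono mult_right_mono) (auto simp: A_def B_def)
  also have "\<dots> = A + B"
    using m by (simp add: field_simps)
  finally have "dist (p l) (T (l + e)) \<le> A + B" .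
  moreover have "A \<le> dist u u' + real e * dist u' v' / real M"
    using dist_triangle[of u "T e" u'] midpoint_chain_dist[OF T M, of 0 e] e
    by (simp add: A_def midpoint_chain_ends[OF T])
  moreover have "B \<le> dist v v' + real (M - (m + e)) * dist u' v' / real M"
    using dist_triangle[of v "T (m + e)" v'] midpoint_chain_dist[OF T M, of "m + e" M] e
    by (simp add: B_def midpoint_chain_ends[OF T] of_nat_diff dist_commute)
  moreover have "real e * dist u' v' / real M + real (M - (m + e)) * dist u' v' / real M
      = (real M - real m) * (dist u' v' / real M)"
    using e M by (simp add: of_nat_diff field_simps)
  moreover have "(real M - real m) * (dist u' v' / real M) \<le> (real M - real m + 1) * (dist u' v' / real M)"
    by (intro mult_right_mono) auto
  ultimately show ?thesis
    by linarith
qed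

text \<open>Two chains are compared through a common finer chain between the endpoints of the second;
  the shift \<open>e\<close> aligns the parities of the alternating midpoints.\<close>

lemma midpoint_chains_compare:
  assumes complete: "complete (UNIV :: 'a set)"
    and p: "midpoint_chain k m u v p" and r: "midpoint_chain k' m' u' v' r"
    and m: "0 < m" "0 < m'" and l: "l \<le> m" "l' \<le> m'"
  shows "dist (p l) (r l') \<le> dist u u' + dist v v'
     + (\<bar>real m - real m'\<bar> + \<bar>real l - real l'\<bar> + 6) * (dist u' v' / real m')"
proof -
  define M where "M = max m m' + 1"
  obtain T where T: "midpoint_chain 0 M u' v' T"
    using midpoint_chain_exists[OF complete, of M 0 u' v'] unfolding M_def by auto
  define e :: nat where "e = (if even k then 0 else 1)"
  define e' :: nat where "e' = (if even k' then 0 else 1)"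
  have e: "e \<le> 1" "m + e \<le> M" "even (0 + e + k)"
    by (auto simp: e_def M_def)
  have e': "e' \<le> 1" "m' + e' \<le> M" "even (0 + e' + k')"
    by (auto simp: e'_def M_def)
  define q where "q = dist u' v' / real M"
  have "dist (p l) (T (l + e)) \<le> dist u u' + dist v v' + (real M - real m + 1) * q"
    unfolding q_def by (rule midpoint_chain_compare_finer[OF p T m(1) e l(1)])
  moreover have "dist (r l') (T (l' + e')) \<le> (real M - real m' + 1) * q"
    using midpoint_chain_compare_finer[OF r T m(2) e' l(2)] by (simp add: q_def)
  moreover have "dist (T (l + e)) (T (l' + e')) = \<bar>real (l + e) - real (l' + e')\<bar> * q"
    unfolding q_def using midpoint_chain_dist[OF T, of "l + e" "l' + e'"] e e' l
    by (simp add: M_def)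
  moreover have "dist (p l) (r l') \<le> dist (p l) (T (l + e)) + dist (T (l + e)) (T (l' + e')) + dist (r l') (T (l' + e'))"
    using dist_triangle[of "p l" "r l'" "T (l + e)"] dist_triangle[of "T (l + e)" "r l'" "T (l' + e')"]
    by (simp add: dist_commute)
  moreover have "((real M - real m + 1) + \<bar>real (l + e) - real (l' + e')\<bar> + (real M - real m' + 1)) * q
      \<le> (\<bar>real m - real m'\<bar> + \<bar>real l - real l'\<bar> + 6) * (dist u' v' / real m')"
  proof -
    have "(real M - real m + 1) + \<bar>real (l + e) - real (l' + e')\<bar> + (real M - real m' + 1)
        \<le> \<bar>real m - real m'\<bar> + \<bar>real l - real l'\<bar> + 6"
      using e e' by (simp add: M_def max_def)
    moreover have "0 \<le> q" "q \<le> dist u' v' / real m'"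
      unfolding q_def using m by (auto intro!: divide_left_mono simp: M_def)
    ultimately show ?thesis
      by (intro mult_mono) auto
  qed
  ultimately show ?thesis
    by (simp add: algebra_simps)
qed

end

section \<open>Approximate geodesics\<close>

definition grid_index :: "nat \<Rightarrow> real \<Rightarrow> nat" where
  "grid_index M t = min M (nat \<lfloor>t * real M\<rfloor>)"

lemma grid_index_le: "grid_index M t \<le> M"
  by (simp add: grid_index_def)

lemma grid_index_0 [simp]: "grid_index M 0 = 0"
  and grid_index_1 [simp]: "grid_index M 1 = M"
  and grid_index_trivial [simp]: "grid_index 0 t = 0"
  by (simp_all add: grid_index_def)

lemma grid_index_bounds:
  assumes "0 \<le> t" "t \<le> 1"
  shows "real (grid_index M t) \<le> t * real M" "t * real M < real (grid_index M t) + 1"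
proof -
  have "0 \<le> t * real M" "t * real M \<le> real M"
    using assms by (auto simp: mult_left_le_one_le)
  then have "real (grid_index M t) = of_int \<lfloor>t * real M\<rfloor>"
    unfolding grid_index_def by (simp add: floor_le_iff nat_le_iff)
  then show "real (grid_index M t) \<le> t * real M" "t * real M < real (grid_index M t) + 1"
    by linarith+
qed

lemma grid_index_diff:
  assumes "0 \<le> a" "a \<le> 1" "0 \<le> b" "b \<le> 1"
  shows "\<bar>real (grid_index M b) - real (grid_index M a) - (b - a) * real M\<bar> < 1"
  using grid_index_bounds[OF assms(1,2), of M] grid_index_bounds[OF assms(3,4), of M]
  by (simp add: algebra_simps)

lemma grid_interpolation_le:
  fixes A B :: real
  assumes M: "0 < M" and t: "0 \<le> t" "t \<le> 1" and AB: "0 \<le> A" "0 \<le> B"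
  defines "i \<equiv> grid_index M t"
  shows "((real M - real i) * A + real i * B) / real M \<le> (1 - t) * A + t * B + (A + B) / real M"
proof -
  define \<delta> where "\<delta> = t * real M - real i"
  have "0 \<le> \<delta>" "\<delta> \<le> 1"
    using grid_index_bounds[OF t, of M] by (auto simp: \<delta>_def i_def)
  then have "\<delta> * A \<le> A" "0 \<le> \<delta> * B"
    using AB by (simp_all add: mult_left_le_one_le)
  then have "\<delta> * A - \<delta> * B \<le> A + B"
    using AB by linarith
  then have "(\<delta> * A - \<delta> * B) / real M \<le> (A + B) / real M"
    using M by (simp add: divide_right_mono)
  moreover have "((real M - real i) * A + real i * B) / real M = (1 - t) * A + t * B + (\<delta> * A - \<delta> * B) / real M"
    using M by (simp add: \<delta>_def field_simps)
  ultimately show ?thesis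
    by linarith
qed

lemma grid_index_subinterval:
  fixes a b t X :: real
  assumes ab: "0 \<le> a" "a < b" "b \<le> 1" and t: "0 \<le> t" "t \<le> 1"
    and M: "X \<le> real M" "real M < X + 1"
    and M': "(b - a) * X \<le> real M'" "real M' < (b - a) * X + 1"
    and fine: "1 \<le> (b - a) * X"
  defines "i \<equiv> grid_index M a" and "j \<equiv> grid_index M b"
    and "l \<equiv> grid_index M (a + t * (b - a))" and "l' \<equiv> grid_index M' t"
  shows "i < j" "i \<le> l" "l \<le> j"
    and "\<bar>real (j - i) - real M'\<bar> \<le> 2" "\<bar>real (l - i) - real l'\<bar> \<le> 3"
proof -
  define c where "c = a + t * (b - a)"
  have "0 \<le> t * (b - a)" "t * (b - a) \<le> b - a"
    using ab t by (simp_all add: mult_left_le_one_le)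
  then have c: "0 \<le> c" "c \<le> 1" "c \<le> b"
    using ab unfolding c_def by linarith+
  have scaled_M: "(b - a) * X \<le> (b - a) * real M" "(b - a) * real M \<le> (b - a) * X + 1"
  proof -
    show "(b - a) * X \<le> (b - a) * real M"
      using M ab by (intro mult_left_mono) auto
    have "(b - a) * real M \<le> (b - a) * (X + 1)"
      using M ab by (intro mult_left_mono) auto
    then show "(b - a) * real M \<le> (b - a) * X + 1"
      using ab by (simp add: algebra_simps)
  qed
  have ij: "\<bar>real j - real i - (b - a) * real M\<bar> < 1"
    using grid_index_diff[of a b M] ab unfolding i_def j_def by simp
  have il: "\<bar>real l - real i - t * ((b - a) * real M)\<bar> < 1"
    using grid_index_diff[of a c M] ab c unfolding i_def l_def by (simp add: c_def)
  have lj: "\<bar>real j - real l - (b - c) * real M\<bar> < 1"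
    using grid_index_diff[of c b M] ab c unfolding l_def j_def c_def by simp
  have l': "real l' \<le> t * real M'" "t * real M' < real l' + 1"
    using grid_index_bounds[OF t] unfolding l'_def by auto
  have "0 \<le> (b - c) * real M" "0 \<le> t * ((b - a) * real M)"
    using ab c t by auto
  then show "i < j" "i \<le> l" "l \<le> j"
    using ij il lj scaled_M fine by linarith+
  have "\<bar>t * ((b - a) * real M) - t * real M'\<bar> = t * \<bar>(b - a) * real M - real M'\<bar>"
    using t by (simp add: abs_mult right_diff_distrib[symmetric])
  also have "\<dots> \<le> 1 * 1"
    using t scaled_M M' by (intro mult_mono) auto
  finally show "\<bar>real (j - i) - real M'\<bar> \<le> 2" "\<bar>real (l - i) - real l'\<bar> \<le> 3"
    using \<open>i < j\<close> \<open>i \<le> l\<close> ij il l' scaled_M M' by (simp_all add: of_nat_diff abs_le_iff) linarith+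
qed

locale proper_conical_midpoint_map = conical_midpoint_map mid
  for mid :: "'a::metric_space \<Rightarrow> 'a \<Rightarrow> 'a" +
  assumes proper: "proper_space TYPE('a)"
begin

lemma complete_UNIV: "complete (UNIV :: 'a set)"
  by (rule proper_space_complete[OF proper])

text \<open>At stage \<open>n\<close> the points \<open>x\<close>, \<open>y\<close> are joined by a midpoint chain whose steps have length at
  most \<open>1/(n+1)\<close>; \<open>approx n (x, y, t)\<close> is the chain point nearest below parameter \<open>t\<close>.\<close>

definition stage_length :: "nat \<Rightarrow> 'a \<Rightarrow> 'a \<Rightarrow> nat" where
  "stage_length n x y = nat \<lceil>real (Suc n) * dist x y\<rceil>"

definition stage_chain :: "nat \<Rightarrow> 'a \<Rightarrow> 'a \<Rightarrow> nat \<Rightarrow> 'a" where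
  "stage_chain n x y = (SOME p. midpoint_chain 0 (stage_length n x y) x y p)"

definition approx :: "nat \<Rightarrow> 'a \<times> 'a \<times> real \<Rightarrow> 'a" where
  "approx n = (\<lambda>(x, y, t). stage_chain n x y (grid_index (stage_length n x y) t))"

lemma approx_apply: "approx n (x, y, t) = stage_chain n x y (grid_index (stage_length n x y) t)"
  by (simp add: approx_def)

lemma stage_length_bounds:
  "real (Suc n) * dist x y \<le> real (stage_length n x y)"
  "real (stage_length n x y) < real (Suc n) * dist x y + 1"
proof -
  have "real (stage_length n x y) = of_int \<lceil>real (Suc n) * dist x y\<rceil>"
    unfolding stage_length_def by (simp add: ceiling_le_iff)
  then show "real (Suc n) * dist x y \<le> real (stage_length n x y)"
    "real (stage_length n x y) < real (Suc n) * dist x y + 1"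
    by linarith+
qed

lemma stage_length_commute: "stage_length n x y = stage_length n y x"
  by (simp add: stage_length_def dist_commute)

lemma stage_length_same [simp]: "stage_length n x x = 0"
  by (simp add: stage_length_def)

lemma stage_length_pos: "x \<noteq> y \<Longrightarrow> 0 < stage_length n x y"
  using stage_length_bounds(1)[of n x y] zero_less_dist_iff[of x y]
  by (metis of_nat_0_less_iff mult_pos_pos of_nat_0_less_iff zero_less_Suc order_less_le_trans)

lemma dist_div_stage_length:
  assumes "x \<noteq> y"
  shows "dist x y / real (stage_length n x y) \<le> 1 / real (Suc n)"
  using stage_length_bounds(1)[of n x y] stage_length_pos[OF assms]
  by (simp add: divide_simps mult.commute)

lemma midpoint_chain_stage_chain: "midpoint_chain 0 (stage_length n x y) x y (stage_chain n x y)"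
proof -
  have "\<exists>p. midpoint_chain 0 (stage_length n x y) x y p"
  proof (cases "x = y")
    case True
    then show ?thesis
      using midpoint_chain_const by auto
  qed (use midpoint_chain_exists[OF complete_UNIV stage_length_pos] in auto)
  then show ?thesis
    unfolding stage_chain_def by (rule someI_ex)
qed

lemma approx_start [simp]: "approx n (x, y, 0) = x"
  and approx_end [simp]: "approx n (x, y, 1) = y"
  and approx_same [simp]: "approx n (x, x, t) = x"
  using midpoint_chain_ends[OF midpoint_chain_stage_chain, of n x y]
    midpoint_chain_ends[OF midpoint_chain_stage_chain, of n x x]
  by (simp_all add: approx_apply)

lemma approx_in_cball: "approx n (x, y, t) \<in> cball x (dist x y)"
proof (cases "x = y")
  case False
  define M where "M = stage_length n x y"
  have "0 < M"
    using stage_length_pos[OF False] by (simp add: M_def)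
  have "dist x (approx n (x, y, t)) = real (grid_index M t) * dist x y / real M"
    using midpoint_chain_dist[OF midpoint_chain_stage_chain \<open>0 < M\<close>[unfolded M_def], of 0 "grid_index M t"]
      midpoint_chain_ends(1)[OF midpoint_chain_stage_chain] grid_index_le[of M t]
    by (simp add: approx_apply M_def)
  also have "\<dots> \<le> dist x y"
  proof -
    have "real (grid_index M t) * dist x y \<le> real M * dist x y"
      using grid_index_le[of M t] by (intro mult_right_mono) auto
    then show ?thesis
      using \<open>0 < M\<close> by (simp add: divide_le_eq mult.commute)
  qed
  finally show ?thesis
    by simp
qed simp

lemma dist_approx_approx:
  assumes a: "0 \<le> a" "a \<le> 1" and b: "0 \<le> b" "b \<le> 1"
  shows "\<bar>dist (approx n (x, y, a)) (approx n (x, y, b)) - \<bar>a - b\<bar> * dist x y\<bar> \<le> 1 / real (Suc n)"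
proof (cases "x = y")
  case False
  define M where "M = stage_length n x y"
  have "0 < M"
    using stage_length_pos[OF False] by (simp add: M_def)
  define i where "i = grid_index M a"
  define j where "j = grid_index M b"
  have dist_eq: "dist (approx n (x, y, a)) (approx n (x, y, b)) = \<bar>real i - real j\<bar> * dist x y / real M"
    unfolding approx_apply M_def[symmetric] i_def j_def
    using midpoint_chain_dist[OF midpoint_chain_stage_chain \<open>0 < M\<close>[unfolded M_def]] grid_index_le
    by (simp add: M_def)
  have rounding: "\<bar>\<bar>real i - real j\<bar> - \<bar>a - b\<bar> * real M\<bar> \<le> 1"
  proof -
    have "\<bar>\<bar>real i - real j\<bar> - \<bar>(a - b) * real M\<bar>\<bar> \<le> \<bar>real i - real j - (a - b) * real M\<bar>"
      by (rule abs_triangle_ineq3)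
    then show ?thesis
      using grid_index_diff[OF b a, of M] unfolding i_def j_def by (simp add: abs_mult)
  qed
  have "dist (approx n (x, y, a)) (approx n (x, y, b)) - \<bar>a - b\<bar> * dist x y
      = (\<bar>real i - real j\<bar> - \<bar>a - b\<bar> * real M) * (dist x y / real M)"
    unfolding dist_eq using \<open>0 < M\<close> by (simp add: field_simps)
  then have "\<bar>dist (approx n (x, y, a)) (approx n (x, y, b)) - \<bar>a - b\<bar> * dist x y\<bar>
      = \<bar>\<bar>real i - real j\<bar> - \<bar>a - b\<bar> * real M\<bar> * (dist x y / real M)"
    by (simp add: abs_mult)
  also have "\<dots> \<le> 1 * (dist x y / real M)"
    using rounding by (intro mult_right_mono) auto
  also have "\<dots> \<le> 1 / real (Suc n)"
    using dist_div_stage_length[OF False, of n] by (simp add: M_def)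
  finally show ?thesis .
qed simp

lemma div_stage_length_le:
  assumes "x \<noteq> y" and "0 \<le> C"
  shows "C / real (stage_length n x y) \<le> C / dist x y / real (Suc n)"
proof -
  have "C / real (stage_length n x y) = C / dist x y * (dist x y / real (stage_length n x y))"
    using assms(1) by simp
  also have "\<dots> \<le> C / dist x y * (1 / real (Suc n))"
    using dist_div_stage_length[OF assms(1)] assms(2) by (intro mult_left_mono) auto
  finally show ?thesis
    by simp
qed

lemma dist_approx_approx_le:
  assumes eq: "dist x y = dist x' y'" and "x \<noteq> y" and t: "0 \<le> t" "t \<le> 1"
  shows "dist (approx n (x, y, t)) (approx n (x', y', t))
    \<le> (1 - t) * dist x x' + t * dist y y' + (dist x x' + dist y y') / dist x y / real (Suc n)"
proof -
  define M where "M = stage_length n x y"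
  have M': "stage_length n x' y' = M"
    unfolding M_def stage_length_def using eq by simp
  have "0 < M"
    using stage_length_pos[OF \<open>x \<noteq> y\<close>] by (simp add: M_def)
  have "dist (approx n (x, y, t)) (approx n (x', y', t))
      \<le> ((real M - real (grid_index M t)) * dist x x' + real (grid_index M t) * dist y y') / real M"
    using midpoint_chain_compare[OF midpoint_chain_stage_chain[of n x y, folded M_def]
        midpoint_chain_stage_chain[of n x' y', unfolded M'] \<open>0 < M\<close> grid_index_le]
    by (simp add: approx_apply M_def M')
  also have "\<dots> \<le> (1 - t) * dist x x' + t * dist y y' + (dist x x' + dist y y') / real M"
    using grid_interpolation_le[OF \<open>0 < M\<close> t] by simp
  also have "(dist x x' + dist y y') / real M \<le> (dist x x' + dist y y') / dist x y / real (Suc n)"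
    unfolding M_def using div_stage_length_le[OF \<open>x \<noteq> y\<close>] by simp
  finally show ?thesis
    by simp
qed

lemma dist_approx_le:
  assumes "x \<noteq> y" and t: "0 \<le> t" "t \<le> 1"
  shows "dist (approx n (x, y, t)) z
    \<le> (1 - t) * dist x z + t * dist y z + (dist x z + dist y z) / dist x y / real (Suc n)"
proof -
  define M where "M = stage_length n x y"
  have "0 < M"
    using stage_length_pos[OF \<open>x \<noteq> y\<close>] by (simp add: M_def)
  have "dist (approx n (x, y, t)) z
      \<le> ((real M - real (grid_index M t)) * dist x z + real (grid_index M t) * dist y z) / real M"
    using midpoint_chain_dist_point[OF midpoint_chain_stage_chain[of n x y, folded M_def] \<open>0 < M\<close> grid_index_le]
    by (simp add: approx_apply M_def)
  also have "\<dots> \<le> (1 - t) * dist x z + t * dist y z + (dist x z + dist y z) / real M"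
    using grid_interpolation_le[OF \<open>0 < M\<close> t] by simp
  also have "(dist x z + dist y z) / real M \<le> (dist x z + dist y z) / dist x y / real (Suc n)"
    unfolding M_def using div_stage_length_le[OF \<open>x \<noteq> y\<close>] by simp
  finally show ?thesis
    by simp
qed

lemma dist_approx_reverse:
  assumes t: "0 \<le> t" "t \<le> 1"
  shows "dist (approx n (y, x, 1 - t)) (approx n (x, y, t)) \<le> 8 / real (Suc n)"
proof (cases "x = y")
  case False
  define M where "M = stage_length n x y"
  have M': "stage_length n y x = M"
    by (simp add: M_def stage_length_commute)
  have "0 < M"
    using stage_length_pos[OF False] by (simp add: M_def)
  define i where "i = grid_index M t"
  define i' where "i' = grid_index M (1 - t)"
  have "i \<le> M" "i' \<le> M"
    by (simp_all add: i_def i'_def grid_index_le)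
  have rounding: "\<bar>real i' - real (M - i)\<bar> \<le> 2"
    using grid_index_bounds[OF t, of M] grid_index_bounds[of "1 - t" M] t \<open>i \<le> M\<close>
    by (simp add: i_def i'_def algebra_simps abs_le_iff)
  have "dist (stage_chain n y x i') (stage_chain n x y (M - (M - i)))
      \<le> (\<bar>real i' - real (M - i)\<bar> + 6) * (dist y x / real M)"
    using midpoint_chains_compare[OF complete_UNIV midpoint_chain_stage_chain[of n y x, unfolded M']
        midpoint_chain_reverse[OF midpoint_chain_stage_chain[of n x y, folded M_def]] \<open>0 < M\<close> \<open>0 < M\<close>
        \<open>i' \<le> M\<close>, of "M - i"]
    by simp
  also have "\<dots> \<le> 8 * (1 / real (Suc n))"
    using rounding dist_div_stage_length[OF False, of n]
    by (intro mult_mono) (auto simp: M_def dist_commute)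
  finally have "dist (stage_chain n y x i') (stage_chain n x y (M - (M - i))) \<le> 8 * (1 / real (Suc n))" .
  then have "dist (stage_chain n y x i') (stage_chain n x y i) \<le> 8 * (1 / real (Suc n))"
    using \<open>i \<le> M\<close> by simp
  then show ?thesis
    by (simp add: approx_apply M' M_def[symmetric] i_def i'_def)
qed simp

lemma dist_approx_subsegment:
  assumes "x \<noteq> y" and ab: "0 \<le> a" "a < b" "b \<le> 1" and t: "0 \<le> t" "t \<le> 1"
    and pq: "dist p q = (b - a) * dist x y"
    and fine: "1 \<le> (b - a) * (real (Suc n) * dist x y)"
  shows "dist (approx n (p, q, t)) (approx n (x, y, a + t * (b - a)))
    \<le> dist (approx n (x, y, a)) p + dist (approx n (x, y, b)) q + 11 / real (Suc n)"
proof -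
  have "p \<noteq> q"
    using pq ab \<open>x \<noteq> y\<close> by auto
  define M where "M = stage_length n x y"
  define M' where "M' = stage_length n p q"
  have "0 < M'"
    using stage_length_pos[OF \<open>p \<noteq> q\<close>] by (simp add: M'_def)
  define i where "i = grid_index M a"
  define j where "j = grid_index M b"
  define l where "l = grid_index M (a + t * (b - a))"
  define l' where "l' = grid_index M' t"
  have "(b - a) * (real (Suc n) * dist x y) \<le> real M'"
    "real M' < (b - a) * (real (Suc n) * dist x y) + 1"
    using stage_length_bounds[of n p q] by (simp_all add: M'_def pq algebra_simps)
  then have "i < j" "i \<le> l" "l \<le> j"
    and rounding: "\<bar>real (j - i) - real M'\<bar> \<le> 2" "\<bar>real (l - i) - real l'\<bar> \<le> 3"
    using grid_index_subinterval[OF ab t stage_length_bounds[of n x y, folded M_def]] fine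
    unfolding i_def j_def l_def l'_def by blast+
  have part: "midpoint_chain i (j - i) (stage_chain n x y i) (stage_chain n x y j) (\<lambda>m. stage_chain n x y (m + i))"
    using midpoint_chain_shift[OF midpoint_chain_stage_chain[of n x y, folded M_def], of i j] \<open>i < j\<close>
    by (simp add: j_def grid_index_le)
  have "dist (stage_chain n x y (l - i + i)) (stage_chain n p q l')
      \<le> dist (stage_chain n x y i) p + dist (stage_chain n x y j) q
        + (\<bar>real (j - i) - real M'\<bar> + \<bar>real (l - i) - real l'\<bar> + 6) * (dist p q / real M')"
    using midpoint_chains_compare[OF complete_UNIV part midpoint_chain_stage_chain[of n p q, folded M'_def]]
      \<open>i < j\<close> \<open>l \<le> j\<close> \<open>0 < M'\<close> by (simp add: l'_def grid_index_le)
  also have "\<dots> \<le> dist (stage_chain n x y i) p + dist (stage_chain n x y j) q + 11 * (1 / real (Suc n))"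
    using rounding dist_div_stage_length[OF \<open>p \<noteq> q\<close>, of n]
    by (intro add_left_mono mult_mono) (auto simp: M'_def)
  finally show ?thesis
    using \<open>i \<le> l\<close> by (simp add: approx_apply dist_commute
        M_def[symmetric] M'_def[symmetric] i_def j_def l_def l'_def)
qed

section \<open>The limit bicombing\<close>

text \<open>The approximations need not converge, and uncountable products of compact sets are not
  sequentially compact; so \<open>geo\<close> is a cluster point of the approximations in the product
  topology, reached along the filter \<open>limit_filter\<close>.\<close>

definition geo :: "'a \<times> 'a \<times> real \<Rightarrow> 'a" where
  "geo = (SOME g. inf (nhds g) (filtermap approx sequentially) \<noteq> bot)"

definition limit_filter :: "('a \<times> 'a \<times> real \<Rightarrow> 'a) filter" where
  "limit_filter = inf (nhds geo) (filtermap approx sequentially)"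

lemma limit_filter_nontrivial: "limit_filter \<noteq> bot"
proof -
  have "approx n z \<in> cball (fst z) (dist (fst z) (fst (snd z)))" for n z
    using approx_in_cball[of n "fst z" "fst (snd z)" "snd (snd z)"] by simp
  then have "\<exists>g. inf (nhds g) (filtermap approx sequentially) \<noteq> bot"
    by (intro product_cluster_point_exists[where K = "\<lambda>z. cball (fst z) (dist (fst z) (fst (snd z)))"])
      (simp_all add: proper_space_compact_cball[OF proper])
  then show ?thesis
    unfolding limit_filter_def geo_def by (rule someI_ex)
qed

lemma tendsto_geo: "((\<lambda>f. f z) \<longlongrightarrow> geo z) limit_filter"
proof -
  have "((\<lambda>f. f) \<longlongrightarrow> geo) limit_filter"
    unfolding limit_filter_def by (rule tendsto_mono[OF inf_le1 filterlim_ident])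
  then show ?thesis
    by (rule continuous_on_tendsto_compose[OF continuous_on_product_coordinates]) auto
qed

lemma tendsto_limit_filter_le:
  fixes \<phi> :: "('a \<times> 'a \<times> real \<Rightarrow> 'a) \<Rightarrow> real"
  assumes lim: "(\<phi> \<longlongrightarrow> c) limit_filter"
    and approx_le: "\<forall>\<^sub>F n in sequentially. \<phi> (approx n) \<le> B + C / real (Suc n)"
  shows "c \<le> B"
proof (rule field_le_epsilon)
  fix e :: real
  assume "0 < e"
  have "\<forall>\<^sub>F n in sequentially. C / real (Suc n) < e"
    using order_tendstoD(2)[OF LIMSEQ_Suc[OF lim_const_over_n[of C]] \<open>0 < e\<close>] by simp
  with approx_le have "\<forall>\<^sub>F n in sequentially. \<phi> (approx n) \<le> B + e"
    by eventually_elim auto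
  then have "\<forall>\<^sub>F f in limit_filter. \<phi> f \<le> B + e"
    unfolding limit_filter_def by (intro filter_leD[OF inf_le2]) (simp add: eventually_filtermap)
  then show "c \<le> B + e"
    using tendsto_le[OF limit_filter_nontrivial tendsto_const lim] by blast
qed

lemma geo_eqI:
  assumes "\<And>n. approx n z = w"
  shows "geo z = w"
proof -
  have "dist (geo z) w \<le> 0"
    by (rule tendsto_limit_filter_le[of "\<lambda>f. dist (f z) w" _ _ 0])
      (auto intro: tendsto_dist tendsto_geo simp: assms)
  then show ?thesis
    by simp
qed

lemma geo_start [simp]: "geo (x, y, 0) = x"
  and geo_end [simp]: "geo (x, y, 1) = y"
  and geo_same [simp]: "geo (x, x, t) = x"
  by (simp_all add: geo_eqI)

lemma dist_geo:
  assumes "0 \<le> a" "a \<le> 1" "0 \<le> b" "b \<le> 1"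
  shows "dist (geo (x, y, a)) (geo (x, y, b)) = \<bar>a - b\<bar> * dist x y"
proof -
  have lim: "((\<lambda>f. dist (f (x, y, a)) (f (x, y, b))) \<longlongrightarrow> dist (geo (x, y, a)) (geo (x, y, b))) limit_filter"
    by (intro tendsto_dist tendsto_geo)
  have bounds: "dist (approx n (x, y, a)) (approx n (x, y, b)) \<le> \<bar>a - b\<bar> * dist x y + 1 / real (Suc n)"
    "- dist (approx n (x, y, a)) (approx n (x, y, b)) \<le> - (\<bar>a - b\<bar> * dist x y) + 1 / real (Suc n)"
    for n
    using dist_approx_approx[OF assms, of n x y] unfolding abs_le_iff by linarith+
  have "dist (geo (x, y, a)) (geo (x, y, b)) \<le> \<bar>a - b\<bar> * dist x y"
    by (rule tendsto_limit_filter_le[OF lim, where C = 1]) (intro always_eventually allI bounds(1))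
  moreover have "- dist (geo (x, y, a)) (geo (x, y, b)) \<le> - (\<bar>a - b\<bar> * dist x y)"
    by (rule tendsto_limit_filter_le[OF tendsto_minus[OF lim], where C = 1]) (intro always_eventually allI bounds(2))
  ultimately show ?thesis
    by linarith
qed

lemma dist_geo_geo_le:
  assumes eq: "dist x y = dist x' y'" and "0 \<le> t" "t \<le> 1"
  shows "dist (geo (x, y, t)) (geo (x', y', t)) \<le> (1 - t) * dist x x' + t * dist y y'"
proof (cases "x = y")
  case False
  show ?thesis
    by (rule tendsto_limit_filter_le[where \<phi> = "\<lambda>f. dist (f (x, y, t)) (f (x', y', t))"
          and C = "(dist x x' + dist y y') / dist x y"])
      (intro tendsto_dist tendsto_geo always_eventually allI dist_approx_approx_le[OF eq False assms(2,3)])+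
qed (use eq in \<open>simp add: algebra_simps\<close>)

lemma dist_geo_le:
  assumes "0 \<le> t" "t \<le> 1"
  shows "dist (geo (x, y, t)) z \<le> (1 - t) * dist x z + t * dist y z"
proof (cases "x = y")
  case False
  show ?thesis
    by (rule tendsto_limit_filter_le[where \<phi> = "\<lambda>f. dist (f (x, y, t)) z"
          and C = "(dist x z + dist y z) / dist x y"])
      (intro tendsto_dist tendsto_geo tendsto_const always_eventually allI dist_approx_le[OF False assms])+
qed (simp add: algebra_simps)

lemma geo_reverse:
  assumes "0 \<le> t" "t \<le> 1"
  shows "geo (y, x, 1 - t) = geo (x, y, t)"
proof -
  have "\<forall>\<^sub>F n in sequentially. dist (approx n (y, x, 1 - t)) (approx n (x, y, t)) \<le> 0 + 8 / real (Suc n)"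
    using dist_approx_reverse[OF assms] by simp
  then have "dist (geo (y, x, 1 - t)) (geo (x, y, t)) \<le> 0"
    by (rule tendsto_limit_filter_le[rotated]) (intro tendsto_dist tendsto_geo)
  then show ?thesis
    by simp
qed

lemma geo_subsegment:
  assumes ab: "0 \<le> a" "a < b" "b \<le> 1" and t: "0 \<le> t" "t \<le> 1"
  shows "geo (geo (x, y, a), geo (x, y, b), t) = geo (x, y, a + t * (b - a))"
proof (cases "x = y")
  case False
  define p where "p = geo (x, y, a)"
  define q where "q = geo (x, y, b)"
  have pq: "dist p q = (b - a) * dist x y"
    using dist_geo[of a b x y] ab by (simp add: p_def q_def)
  have "0 < (b - a) * dist x y"
    using ab False by simp
  obtain N :: nat where N: "1 / ((b - a) * dist x y) < real N"
    using reals_Archimedean2 by blast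
  have "\<forall>\<^sub>F n in sequentially.
      dist (approx n (p, q, t)) (approx n (x, y, a + t * (b - a)))
        - dist (approx n (x, y, a)) p - dist (approx n (x, y, b)) q \<le> 0 + 11 / real (Suc n)"
    unfolding eventually_sequentially
  proof (intro exI allI impI)
    fix n
    assume "N \<le> n"
    then have "1 / ((b - a) * dist x y) < real (Suc n)"
      using N by linarith
    then have "1 \<le> (b - a) * (real (Suc n) * dist x y)"
      using \<open>0 < (b - a) * dist x y\<close> by (simp add: divide_less_eq algebra_simps)
    then show "dist (approx n (p, q, t)) (approx n (x, y, a + t * (b - a)))
        - dist (approx n (x, y, a)) p - dist (approx n (x, y, b)) q \<le> 0 + 11 / real (Suc n)"
      using dist_approx_subsegment[OF False ab t pq] by force
  qed
  moreover have "((\<lambda>f. dist (f (p, q, t)) (f (x, y, a + t * (b - a))) - dist (f (x, y, a)) p - dist (f (x, y, b)) q)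
      \<longlongrightarrow> dist (geo (p, q, t)) (geo (x, y, a + t * (b - a))) - dist p p - dist q q) limit_filter"
    unfolding p_def q_def by (intro tendsto_intros tendsto_geo)
  ultimately have "dist (geo (p, q, t)) (geo (x, y, a + t * (b - a))) - dist p p - dist q q \<le> 0"
    by (intro tendsto_limit_filter_le)
  then show ?thesis
    by (simp add: p_def q_def)
qed simp

lemma geo_convex_combination:
  assumes "0 \<le> s" "s \<le> 1" "0 \<le> s'" "s' \<le> 1" "0 \<le> t" "t \<le> 1"
  shows "geo (x, y, (1 - t) * s + t * s') = geo (geo (x, y, s), geo (x, y, s'), t)"
proof (cases s s' rule: linorder_cases)
  case less
  then show ?thesis
    using geo_subsegment[of s s' t x y] assms by (simp add: algebra_simps)
next
  case greater
  then have "geo (geo (x, y, s'), geo (x, y, s), 1 - t) = geo (x, y, s' + (1 - t) * (s - s'))"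
    using geo_subsegment[of s' s "1 - t" x y] assms by simp
  then show ?thesis
    using geo_reverse[where x = "geo (x, y, s)" and y = "geo (x, y, s')" and t = t] assms
    by (simp add: algebra_simps)
qed (simp add: algebra_simps)

lemma bicombing_geo: "bicombing (\<lambda>x y t. geo (x, y, t))"
  unfolding bicombing_def geodesic01_def by (simp add: dist_geo)

lemma consistent_geo: "consistent (\<lambda>x y t. geo (x, y, t))"
  unfolding consistent_def
proof (intro allI impI subsetI)
  fix x y p q w
  assume "p \<in> (\<lambda>t. geo (x, y, t)) ` {0..1} \<and> q \<in> (\<lambda>t. geo (x, y, t)) ` {0..1}"
    and "w \<in> (\<lambda>t. geo (p, q, t)) ` {0..1}"
  then obtain s s' t where st: "s \<in> {0..1}" "s' \<in> {0..1}" "t \<in> {0..1}"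
    and w: "w = geo (geo (x, y, s), geo (x, y, s'), t)"
    by auto
  have "(1 - t) * s + t * s' \<in> {0..1}"
    using st convex_real_interval(5)[of 0 1] unfolding convex_alt by auto
  moreover have "w = geo (x, y, (1 - t) * s + t * s')"
    using geo_convex_combination[of s s' t x y] st w by simp
  ultimately show "w \<in> (\<lambda>t. geo (x, y, t)) ` {0..1}"
    by blast
qed

lemma straight_geo: "straight (\<lambda>t. geo (x, y, t))"
  unfolding straight_def
proof (intro allI convex_onI)
  fix z and t s s' :: real
  assume "0 < t" "t < 1" "s \<in> {0..1}" "s' \<in> {0..1}"
  then show "dist z (geo (x, y, (1 - t) *\<^sub>R s + t *\<^sub>R s'))
      \<le> (1 - t) * dist z (geo (x, y, s)) + t * dist z (geo (x, y, s'))"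
    using geo_convex_combination[of s s' t x y] dist_geo_le[of t "geo (x, y, s)" "geo (x, y, s')" z]
    by (simp add: dist_commute)
qed (rule convex_real_interval)

lemma convex_on_dist_geo:
  assumes "dist x y = dist x' y'"
  shows "convex_on {0..1} (\<lambda>t. dist (geo (x, y, t)) (geo (x', y', t)))"
proof (rule convex_onI)
  fix t s s' :: real
  assume "0 < t" "t < 1" "s \<in> {0..1}" "s' \<in> {0..1}"
  moreover have "dist (geo (x, y, s)) (geo (x, y, s')) = dist (geo (x', y', s)) (geo (x', y', s'))"
    using dist_geo[of s s'] assms \<open>s \<in> {0..1}\<close> \<open>s' \<in> {0..1}\<close> by simp
  ultimately show "dist (geo (x, y, (1 - t) *\<^sub>R s + t *\<^sub>R s')) (geo (x', y', (1 - t) *\<^sub>R s + t *\<^sub>R s'))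
      \<le> (1 - t) * dist (geo (x, y, s)) (geo (x', y', s)) + t * dist (geo (x, y, s')) (geo (x', y', s'))"
    using geo_convex_combination[of s s' t] dist_geo_geo_le[of _ _ _ _ t] by simp
qed (rule convex_real_interval)

end

lemma conical_midpoint_map_bicombing:
  assumes "bicombing \<sigma>" and "conical \<sigma>"
  shows "conical_midpoint_map (\<lambda>a b. \<sigma> a b (1 / 2))"
proof
  fix a b a' b' :: 'a
  have "geodesic01 (\<sigma> a a) a a"
    using assms(1) by (simp add: bicombing_def)
  then have start: "\<sigma> a a 0 = a"
    and geodesic: "\<forall>s\<in>{0..1}. \<forall>t\<in>{0..1}. dist (\<sigma> a a s) (\<sigma> a a t) = \<bar>s - t\<bar> * dist a a"
    unfolding geodesic01_def by blast+
  show "\<sigma> a a (1 / 2) = a"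
    using start bspec[OF bspec[OF geodesic, of 0], of "1 / 2"] by simp
  have "\<forall>t\<in>{0..1}. dist (\<sigma> a b t) (\<sigma> a' b' t) \<le> (1 - t) * dist a a' + t * dist b b'"
    using assms(2) unfolding conical_def by blast
  then have "dist (\<sigma> a b (1 / 2)) (\<sigma> a' b' (1 / 2)) \<le> (1 - 1 / 2) * dist a a' + 1 / 2 * dist b b'"
    by (rule bspec) auto
  then show "dist (\<sigma> a b (1 / 2)) (\<sigma> a' b' (1 / 2)) \<le> (dist a a' + dist b b') / 2"
    by simp
qed

theorem theorem1p5:
  fixes \<sigma> :: "'a::metric_space \<Rightarrow> 'a \<Rightarrow> real \<Rightarrow> 'a"
  assumes "proper_space TYPE('a)"
    and "bicombing \<sigma>" and "conical \<sigma>"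
  shows "\<exists>s :: 'a \<Rightarrow> 'a \<Rightarrow> real \<Rightarrow> 'a. bicombing s \<and> consistent s
           \<and> (\<forall>x y. straight (s x y))
           \<and> (\<forall>x y x' y'. dist x y = dist x' y' \<longrightarrow>
                 convex_on {0..1} (\<lambda>t. dist (s x y t) (s x' y' t)))"
proof -
  interpret proper_conical_midpoint_map "\<lambda>a b. \<sigma> a b (1 / 2)"
    using conical_midpoint_map_bicombing[OF assms(2,3)] assms(1)
    by (simp add: proper_conical_midpoint_map_def proper_conical_midpoint_map_axioms_def)
  show ?thesis
    using bicombing_geo consistent_geo straight_geo convex_on_dist_geo by blast
qed

end
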